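(* In the setting of the context, suppose that $R=S$ and that $A$ is not abelian. If $v\in C_V(A)$ satisfies $[v\mu,a]-vh_a=0$ for all $a\in A$, then $v=0$.
   Context: Conventions: $G$ acts on $V$ on the right, $[v,g]=-v+vg$; $[X,Y]$ is the subgroup generated by commutators, $[X,Y,Z]=[[X,Y],Z]$; $A^\#=A\setminus\{1\}$. Setting: $G=\langle A,B\rangle$ is an abstract rank one group with unipotent subgroups $A,B$ (distinct nilpotent; for each $a\in A^\#$ some $b(a)\in B^\#$ with $B^a=A^{b(a)}$, and vice versa). $\mu_a=b(a^{-1})ab(a)^{-1}$, $H=\langle\mu_a\mu_c:a,c\in A^\#\rangle$. $V$ is a $\mathbb{Z}G$-module with $[V,A,A,A]=0$, $[V,G,G,G]\neq0$, $[V,G]=V$, $C_V(G)=0$. $A_0=C_A([V,A])\cap C_A(V/C_V(A))\neq1$. Fix $e\in A_0^\#$ (with $e=a^2$ for some $a\in A$ if $V$ has exponent 2 and $A$ is non-abelian), $\mu=\mu_{e^{-1}}$, $h_a=\mu\mu_a$ for $a\in A^\#$, $h_1=0$; $\rho(h)$ = restriction of $h\in H$ to $C_V(A)$, $\rho(h_1)=0$. $R$, $S$ are the subrings of $\mathrm{End}(C_V(A))$ generated by $J=\{\rho(h_a):a\in A_0\}$, resp. by $\rho(H)$. *)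

theory Defs
  imports "HOL-Algebra.Algebra"
begin

definition conjset :: "('g, 'b) monoid_scheme \<Rightarrow> 'g set \<Rightarrow> 'g \<Rightarrow> 'g set" where
  "conjset G S g = {monoid.mult G (monoid.mult G (m_inv G g) x) g | x. x \<in> S}"

definition gcomm :: "('g, 'b) monoid_scheme \<Rightarrow> 'g set \<Rightarrow> 'g set \<Rightarrow> 'g set" where
  "gcomm G S T = generate G
     {monoid.mult G (monoid.mult G (monoid.mult G (m_inv G x) (m_inv G y)) x) y | x y. x \<in> S \<and> y \<in> T}"

fun lower_central :: "('g, 'b) monoid_scheme \<Rightarrow> 'g set \<Rightarrow> nat \<Rightarrow> 'g set" where
  "lower_central G S 0 = S"
| "lower_central G S (Suc n) = gcomm G (lower_central G S n) S"

definition nilpotent_subgroup :: "('g, 'b) monoid_scheme \<Rightarrow> 'g set \<Rightarrow> bool" where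
  "nilpotent_subgroup G S \<longleftrightarrow> subgroup S G \<and> (\<exists>n. lower_central G S n = {one G})"

definition abelian_set :: "('g, 'b) monoid_scheme \<Rightarrow> 'g set \<Rightarrow> bool" where
  "abelian_set G S \<longleftrightarrow> (\<forall>x\<in>S. \<forall>y\<in>S. monoid.mult G x y = monoid.mult G y x)"

text \<open>Abstract rank one group G = <A,B> with unipotent subgroups A, B;
  bf is the function a \<mapsto> b(a) (B^a = A^{b(a)}).\<close>
definition rank_one_group ::
  "('g, 'b) monoid_scheme \<Rightarrow> 'g set \<Rightarrow> 'g set \<Rightarrow> ('g \<Rightarrow> 'g) \<Rightarrow> bool" where
  "rank_one_group G A B bf \<longleftrightarrow>
     group G \<and> nilpotent_subgroup G A \<and> nilpotent_subgroup G B \<and> A \<noteq> B \<and>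
     generate G (A \<union> B) = carrier G \<and>
     (\<forall>a \<in> A - {one G}. bf a \<in> B - {one G} \<and> conjset G B a = conjset G A (bf a)) \<and>
     (\<forall>b \<in> B - {one G}. \<exists>a \<in> A - {one G}. conjset G A b = conjset G B a)"

definition mu_elt :: "('g, 'b) monoid_scheme \<Rightarrow> ('g \<Rightarrow> 'g) \<Rightarrow> 'g \<Rightarrow> 'g" where
  "mu_elt G bf a = monoid.mult G (monoid.mult G (bf (m_inv G a)) a) (m_inv G (bf a))"

definition Hgrp :: "('g, 'b) monoid_scheme \<Rightarrow> 'g set \<Rightarrow> ('g \<Rightarrow> 'g) \<Rightarrow> 'g set" where
  "Hgrp G A bf = generate G {monoid.mult G (mu_elt G bf a) (mu_elt G bf c) | a c.
       a \<in> A - {one G} \<and> c \<in> A - {one G}}"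

section \<open>Modules: V is the whole type 'v, G acts on the right via act\<close>

definition right_ZG_module ::
  "('g, 'b) monoid_scheme \<Rightarrow> ('v::ab_group_add \<Rightarrow> 'g \<Rightarrow> 'v) \<Rightarrow> bool" where
  "right_ZG_module G act \<longleftrightarrow>
     (\<forall>v. act v (one G) = v) \<and>
     (\<forall>v. \<forall>g\<in>carrier G. \<forall>h\<in>carrier G. act (act v g) h = act v (monoid.mult G g h)) \<and>
     (\<forall>v w. \<forall>g\<in>carrier G. act (v + w) g = act v g + act w g)"

inductive_set addgen :: "'v::ab_group_add set \<Rightarrow> 'v set" for S where
  zero: "0 \<in> addgen S"
| base: "x \<in> S \<Longrightarrow> x \<in> addgen S"
| diff: "x \<in> addgen S \<Longrightarrow> y \<in> addgen S \<Longrightarrow> x - y \<in> addgen S"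

definition mcomm :: "('v::ab_group_add \<Rightarrow> 'g \<Rightarrow> 'v) \<Rightarrow> 'v \<Rightarrow> 'g \<Rightarrow> 'v" where
  "mcomm act v g = - v + act v g"

definition mcommset :: "('v::ab_group_add \<Rightarrow> 'g \<Rightarrow> 'v) \<Rightarrow> 'v set \<Rightarrow> 'g set \<Rightarrow> 'v set" where
  "mcommset act W S = addgen {mcomm act w x | w x. w \<in> W \<and> x \<in> S}"

definition centralizer_V :: "('v \<Rightarrow> 'g \<Rightarrow> 'v) \<Rightarrow> 'g set \<Rightarrow> 'v set" where
  "centralizer_V act S = {v. \<forall>g\<in>S. act v g = v}"

text \<open>A_0 = C_A([V,A]) \<inter> C_A(V/C_V(A))\<close>
definition A0set :: "('v::ab_group_add \<Rightarrow> 'g \<Rightarrow> 'v) \<Rightarrow> 'g set \<Rightarrow> 'g set" where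
  "A0set act A = {a \<in> A. (\<forall>w \<in> mcommset act UNIV A. act w a = w) \<and>
                          (\<forall>v. mcomm act v a \<in> centralizer_V act A)}"

text \<open>Endomorphisms of C_V(A) are represented by functions 'v \<Rightarrow> 'v that vanish outside C_V(A).
  rho h = restriction of h to C_V(A).\<close>
definition rho :: "('v::ab_group_add \<Rightarrow> 'g \<Rightarrow> 'v) \<Rightarrow> 'g set \<Rightarrow> 'g \<Rightarrow> ('v \<Rightarrow> 'v)" where
  "rho act A h = (\<lambda>v. if v \<in> centralizer_V act A then act v h else 0)"

inductive_set subring_gen :: "'v::ab_group_add set \<Rightarrow> ('v \<Rightarrow> 'v) set \<Rightarrow> ('v \<Rightarrow> 'v) set"
  for C J where
  one: "(\<lambda>v. if v \<in> C then v else 0) \<in> subring_gen C J"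
| base: "f \<in> J \<Longrightarrow> f \<in> subring_gen C J"
| diff: "f \<in> subring_gen C J \<Longrightarrow> g \<in> subring_gen C J \<Longrightarrow> (\<lambda>v. f v - g v) \<in> subring_gen C J"
| comp: "f \<in> subring_gen C J \<Longrightarrow> g \<in> subring_gen C J \<Longrightarrow> (\<lambda>v. g (f v)) \<in> subring_gen C J"

text \<open>rho(h_a) with h_a = mu mu_a, mu = mu_{e^-1}, and rho(h_1) = 0\<close>
definition rho_h :: "('g, 'b) monoid_scheme \<Rightarrow> ('v::ab_group_add \<Rightarrow> 'g \<Rightarrow> 'v) \<Rightarrow> 'g set \<Rightarrow>
    ('g \<Rightarrow> 'g) \<Rightarrow> 'g \<Rightarrow> 'g \<Rightarrow> ('v \<Rightarrow> 'v)" where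
  "rho_h G act A bf e a = (if a = one G then (\<lambda>v. 0)
      else rho act A (monoid.mult G (mu_elt G bf (m_inv G e)) (mu_elt G bf a)))"

definition Rring where
  "Rring G act A bf e = subring_gen (centralizer_V act A) {rho_h G act A bf e a | a. a \<in> A0set act A}"

definition Sring where
  "Sring G act A bf = subring_gen (centralizer_V act A) {rho act A h | h. h \<in> Hgrp G A bf}"

end

theory Submission
  imports Defs
begin

text \<open>The map \<open>a \<mapsto> [v\<mu>, a]\<close> takes values in \<open>C\<^sub>V(A)\<close>: for \<open>a \<noteq> 1\<close> it equals \<open>v h\<^sub>a\<close>, and \<open>h\<^sub>a\<close>
  normalises \<open>A\<close> because \<open>\<mu>\<close> and \<open>\<mu>\<^sub>a\<close> both swap \<open>A\<close> and \<open>B\<close>. A map \<open>a \<mapsto> [w, a]\<close> with values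
  fixed by \<open>A\<close> is a homomorphism from \<open>A\<close> to the abelian group \<open>V\<close>, so it vanishes on
  commutators. Since \<open>A\<close> is not abelian there is a commutator \<open>c \<noteq> 1\<close> in \<open>A\<close>, whence
  \<open>v h\<^sub>c = 0\<close>, and \<open>v = 0\<close> as \<open>h\<^sub>c\<close> acts invertibly.\<close>

context group
begin

lemma conjset_mult:
  assumes S: "S \<subseteq> carrier G" and g: "g \<in> carrier G" and h: "h \<in> carrier G"
  shows "conjset G S (g \<otimes> h) = conjset G (conjset G S g) h"
proof -
  have eq: "inv (g \<otimes> h) \<otimes> x \<otimes> (g \<otimes> h) = inv h \<otimes> (inv g \<otimes> x \<otimes> g) \<otimes> h"
    if "x \<in> S" for x
    using that S g h by (auto simp: inv_mult_group m_assoc)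
  show ?thesis
    unfolding conjset_def
  proof (intro equalityI subsetI)
    fix z assume "z \<in> {inv (g \<otimes> h) \<otimes> x \<otimes> (g \<otimes> h) |x. x \<in> S}"
    then obtain x where "x \<in> S" "z = inv h \<otimes> (inv g \<otimes> x \<otimes> g) \<otimes> h"
      using eq by blast
    then show "z \<in> {inv h \<otimes> y \<otimes> h |y. y \<in> {inv g \<otimes> x \<otimes> g |x. x \<in> S}}" by blast
  next
    fix z assume "z \<in> {inv h \<otimes> y \<otimes> h |y. y \<in> {inv g \<otimes> x \<otimes> g |x. x \<in> S}}"
    then obtain x where "x \<in> S" "z = inv (g \<otimes> h) \<otimes> x \<otimes> (g \<otimes> h)"
      using eq by auto
    then show "z \<in> {inv (g \<otimes> h) \<otimes> x \<otimes> (g \<otimes> h) |x. x \<in> S}" by blast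
  qed
qed

lemma conjset_one:
  assumes "S \<subseteq> carrier G"
  shows "conjset G S \<one> = S"
  unfolding conjset_def using assms by force

lemma conjset_subgroup_self:
  assumes S: "subgroup S G" and g: "g \<in> S"
  shows "conjset G S g = S"
proof (intro equalityI subsetI)
  fix y assume "y \<in> conjset G S g"
  then show "y \<in> S"
    using S g unfolding conjset_def by (auto simp: subgroup.m_closed subgroup.m_inv_closed)
next
  fix y assume y: "y \<in> S"
  have gc: "g \<in> carrier G" and yc: "y \<in> carrier G"
    using S g y subgroup.subset by blast+
  have "g \<otimes> y \<otimes> inv g \<in> S"
    using S g y by (simp add: subgroup.m_closed subgroup.m_inv_closed)
  moreover have "y = inv g \<otimes> (g \<otimes> y \<otimes> inv g) \<otimes> g"
    using gc yc by (metis inv_closed l_inv l_one m_assoc m_closed r_one)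
  ultimately show "y \<in> conjset G S g"
    unfolding conjset_def by blast
qed

lemma mu_elt_swaps:
  assumes A: "subgroup A G" and B: "subgroup B G"
    and bf: "\<forall>a \<in> A - {\<one>}. bf a \<in> B - {\<one>} \<and> conjset G B a = conjset G A (bf a)"
    and a: "a \<in> A - {\<one>}"
  shows "mu_elt G bf a \<in> carrier G"
    and "conjset G A (mu_elt G bf a) = B"
    and "conjset G B (mu_elt G bf a) = A"
proof -
  have Ac: "A \<subseteq> carrier G" and Bc: "B \<subseteq> carrier G"
    using A B subgroup.subset by blast+
  have ac: "a \<in> carrier G" using a Ac by blast
  have ia: "inv a \<in> A - {\<one>}"
    using a A ac by (auto simp: subgroup.m_inv_closed)
  have b1: "bf (inv a) \<in> B" "conjset G B (inv a) = conjset G A (bf (inv a))"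
    and b2: "bf a \<in> B" "conjset G B a = conjset G A (bf a)"
    using bf ia a by auto
  have b1c: "bf (inv a) \<in> carrier G" and b2c: "bf a \<in> carrier G"
    using b1 b2 Bc by auto
  have ib2: "inv (bf a) \<in> B"
    using b2 B by (simp add: subgroup.m_inv_closed)
  have conj_mu: "conjset G S (mu_elt G bf a)
      = conjset G (conjset G (conjset G S (bf (inv a))) a) (inv (bf a))"
    if "S \<subseteq> carrier G" for S
  proof -
    have "conjset G S (bf (inv a)) \<subseteq> carrier G"
      unfolding conjset_def using that b1c by auto
    then show ?thesis
      unfolding mu_elt_def using that b1c b2c ac by (simp add: conjset_mult)
  qed
  show "mu_elt G bf a \<in> carrier G"
    unfolding mu_elt_def using b1c b2c ac by simp
  have "conjset G (conjset G A (bf (inv a))) a = conjset G B (inv a \<otimes> a)"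
    using b1(2) conjset_mult[OF Bc, of "inv a" a] ac by simp
  then show "conjset G A (mu_elt G bf a) = B"
    using conj_mu[OF Ac] ac conjset_one[OF Bc] conjset_subgroup_self[OF B ib2] by simp
  have "conjset G (conjset G A (bf a)) (inv (bf a)) = A"
    using conjset_mult[OF Ac b2c, of "inv (bf a)"] b2c conjset_one[OF Ac] by simp
  then show "conjset G B (mu_elt G bf a) = A"
    using conj_mu[OF Bc] conjset_subgroup_self[OF B b1(1)] b2(2) by simp
qed

lemma commutator_ne_one_if_not_abelian:
  assumes "A \<subseteq> carrier G" "\<not> abelian_set G A"
  obtains x y where "x \<in> A" "y \<in> A" "inv x \<otimes> inv y \<otimes> x \<otimes> y \<noteq> \<one>"
proof -
  obtain x y where xy: "x \<in> A" "y \<in> A" "x \<otimes> y \<noteq> y \<otimes> x"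
    using assms(2) unfolding abelian_set_def by blast
  then have xc: "x \<in> carrier G" and yc: "y \<in> carrier G"
    using assms(1) by auto
  have "y \<otimes> x \<otimes> (inv x \<otimes> inv y \<otimes> x \<otimes> y) = x \<otimes> y"
    using xc yc by (simp add: m_assoc[symmetric]) (simp add: m_assoc)
  then have "inv x \<otimes> inv y \<otimes> x \<otimes> y \<noteq> \<one>"
    using xy(3) xc yc by auto
  then show thesis using that xy by blast
qed

end

lemma right_ZG_moduleD:
  assumes "right_ZG_module G act"
  shows "act v \<one>\<^bsub>G\<^esub> = v"
    and "g \<in> carrier G \<Longrightarrow> h \<in> carrier G \<Longrightarrow> act (act v g) h = act v (g \<otimes>\<^bsub>G\<^esub> h)"
    and "g \<in> carrier G \<Longrightarrow> act (v + w) g = act v g + act w g"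
  using assms unfolding right_ZG_module_def by blast+

lemma right_ZG_module_act_zero:
  assumes "right_ZG_module G act" "g \<in> carrier G"
  shows "act 0 g = 0"
  using right_ZG_moduleD(3)[OF assms, of 0 0] by simp

context group
begin

lemma act_eq_zero_iff:
  assumes M: "right_ZG_module G act" and g: "g \<in> carrier G"
  shows "act v g = 0 \<longleftrightarrow> v = 0"
proof
  assume "act v g = 0"
  then have "act (act v g) (inv g) = 0"
    using right_ZG_module_act_zero[OF M] g by simp
  then show "v = 0"
    using right_ZG_moduleD[OF M] g by simp
qed (use right_ZG_module_act_zero[OF M g] in simp)

lemma act_normaliser_centralizer_V:
  assumes M: "right_ZG_module G act" and Ac: "A \<subseteq> carrier G"
    and h: "h \<in> carrier G" "conjset G A h = A"
    and v: "v \<in> centralizer_V act A"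
  shows "act v h \<in> centralizer_V act A"
  unfolding centralizer_V_def
proof (intro CollectI ballI)
  fix x assume "x \<in> A"
  then obtain y where y: "y \<in> A" "x = inv h \<otimes> y \<otimes> h"
    using h(2) unfolding conjset_def by blast
  have yc: "y \<in> carrier G" using y Ac by blast
  have "h \<otimes> x = y \<otimes> h"
    using y h yc by (simp add: m_assoc[symmetric])
  then have "act (act v h) x = act (act v y) h"
    using right_ZG_moduleD(2)[OF M] y Ac h yc by auto
  also have "act v y = v"
    using v y unfolding centralizer_V_def by blast
  finally show "act (act v h) x = act v h" .
qed

lemma mcomm_mult:
  assumes M: "right_ZG_module G act" and a: "a \<in> carrier G" and b: "b \<in> carrier G"
    and fixed: "act (mcomm act w a) b = mcomm act w a"
  shows "mcomm act w (a \<otimes> b) = mcomm act w a + mcomm act w b"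
proof -
  have "act w a = w + mcomm act w a"
    unfolding mcomm_def by simp
  then have "act w (a \<otimes> b) = act w b + mcomm act w a"
    using right_ZG_moduleD[OF M] a b fixed by (metis add.commute)
  then show ?thesis
    unfolding mcomm_def by (simp add: algebra_simps)
qed

lemma mcomm_commutator_eq_zero:
  assumes M: "right_ZG_module G act" and A: "subgroup A G"
    and centr: "\<forall>a\<in>A. mcomm act w a \<in> centralizer_V act A"
    and x: "x \<in> A" and y: "y \<in> A"
  shows "mcomm act w (inv x \<otimes> inv y \<otimes> x \<otimes> y) = 0"
proof -
  have Ac: "A \<subseteq> carrier G" using A subgroup.subset by blast
  have hom: "mcomm act w (a \<otimes> b) = mcomm act w a + mcomm act w b"
    if "a \<in> A" "b \<in> A" for a b
    using that Ac centr by (intro mcomm_mult[OF M]) (auto simp: centralizer_V_def)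
  have inv: "mcomm act w (inv a) = - mcomm act w a" if "a \<in> A" for a
  proof -
    have "mcomm act w \<one> = 0"
      unfolding mcomm_def using right_ZG_moduleD(1)[OF M] by simp
    then have "mcomm act w (inv a) + mcomm act w a = 0"
      using hom[of "inv a" a] that A Ac by (auto simp: subgroup.m_inv_closed)
    then show ?thesis by (simp add: add_eq_0_iff)
  qed
  show ?thesis
    using hom inv x y A by (simp add: subgroup.m_closed subgroup.m_inv_closed)
qed

lemma eq_zero_if_mcomm_mu_eq_rho_h:
  assumes M: "right_ZG_module G act" and A: "subgroup A G" and B: "subgroup B G"
    and bf: "\<forall>a \<in> A - {\<one>}. bf a \<in> B - {\<one>} \<and> conjset G B a = conjset G A (bf a)"
    and nonab: "\<not> abelian_set G A"
    and e: "e \<in> A - {\<one>}"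
    and v: "v \<in> centralizer_V act A"
    and hyp: "\<forall>a\<in>A. mcomm act (act v (mu_elt G bf (inv e))) a - rho_h G act A bf e a v = 0"
  shows "v = 0"
proof -
  have Ac: "A \<subseteq> carrier G" using A subgroup.subset by blast
  have inv_e: "inv e \<in> A - {\<one>}"
    using e A Ac by (auto simp: subgroup.m_inv_closed)
  define mu where "mu = mu_elt G bf (inv e)"
  note mu = mu_elt_swaps[OF A B bf inv_e, folded mu_def]
  have h_normalises: "mu \<otimes> mu_elt G bf a \<in> carrier G \<and> conjset G A (mu \<otimes> mu_elt G bf a) = A"
    if "a \<in> A - {\<one>}" for a
    using mu mu_elt_swaps[OF A B bf that] conjset_mult[OF Ac] by simp
  have mcomm_eq: "mcomm act (act v mu) a = (if a = \<one> then 0 else act v (mu \<otimes> mu_elt G bf a))"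
    if "a \<in> A" for a
    using hyp that v unfolding rho_h_def rho_def mu_def by simp
  have "\<forall>a\<in>A. mcomm act (act v mu) a \<in> centralizer_V act A"
    using mcomm_eq h_normalises act_normaliser_centralizer_V[OF M Ac _ _ v] Ac
    by (auto simp: centralizer_V_def right_ZG_module_act_zero[OF M])
  then have kills_commutators: "mcomm act (act v mu) (inv x \<otimes> inv y \<otimes> x \<otimes> y) = 0"
    if "x \<in> A" "y \<in> A" for x y
    using mcomm_commutator_eq_zero[OF M A] that by blast
  obtain x y where xy: "x \<in> A" "y \<in> A" and c: "inv x \<otimes> inv y \<otimes> x \<otimes> y \<noteq> \<one>"
    using commutator_ne_one_if_not_abelian[OF Ac nonab] .
  have cA: "inv x \<otimes> inv y \<otimes> x \<otimes> y \<in> A"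
    using xy A by (simp add: subgroup.m_closed subgroup.m_inv_closed)
  have "act v (mu \<otimes> mu_elt G bf (inv x \<otimes> inv y \<otimes> x \<otimes> y)) = 0"
    using kills_commutators[OF xy] mcomm_eq[OF cA] c by simp
  then show "v = 0"
    using act_eq_zero_iff[OF M] h_normalises c cA by blast
qed

end

theorem proposition5p4:
  fixes G :: "('g, 'b) monoid_scheme"
    and A B :: "'g set"
    and bf :: "'g \<Rightarrow> 'g"
    and act :: "'v::ab_group_add \<Rightarrow> 'g \<Rightarrow> 'v"
    and e :: 'g and v :: 'v
  assumes rank1: "rank_one_group G A B bf"
    and module: "right_ZG_module G act"
    and AAA: "mcommset act (mcommset act (mcommset act UNIV A) A) A = {0}"
    and GGG: "mcommset act (mcommset act (mcommset act UNIV (carrier G)) (carrier G)) (carrier G) \<noteq> {0}"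
    and VG: "mcommset act UNIV (carrier G) = UNIV"
    and CVG: "centralizer_V act (carrier G) = {0}"
    and A0: "A0set act A \<noteq> {one G}"
    and e_in: "e \<in> A0set act A" and e_ne: "e \<noteq> one G"
    and e_sq: "(\<forall>w::'v. w + w = 0) \<and> \<not> abelian_set G A \<longrightarrow> (\<exists>a\<in>A. e = monoid.mult G a a)"
    and RS: "Rring G act A bf e = Sring G act A bf"
    and nonab: "\<not> abelian_set G A"
    and v_in: "v \<in> centralizer_V act A"
    and hyp: "\<forall>a\<in>A. mcomm act (act v (mu_elt G bf (m_inv G e))) a - rho_h G act A bf e a v = 0"
  shows "v = 0"
proof -
  interpret group G using rank1 unfolding rank_one_group_def by blast
  show ?thesis
  proof (rule eq_zero_if_mcomm_mu_eq_rho_h[OF module _ _ _ nonab _ v_in hyp])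
    show "subgroup A G" "subgroup B G"
      "\<forall>a \<in> A - {\<one>\<^bsub>G\<^esub>}. bf a \<in> B - {\<one>\<^bsub>G\<^esub>} \<and> conjset G B a = conjset G A (bf a)"
      using rank1 unfolding rank_one_group_def nilpotent_subgroup_def by blast+
    show "e \<in> A - {\<one>\<^bsub>G\<^esub>}"
      using e_in e_ne unfolding A0set_def by blast
  qed
qed

end
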